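(* Let $2\le r\le n$ be integers and fix positive integers $s_2,\ldots,s_r$. Then there exists an integer $M$ (depending on $n$ and $(s_2,\ldots,s_r)$) such that $H_n(s_1,s_2,\ldots,s_r)$ is not an integer for every integer $s_1>M$.
   Context: $H_n(s_1,\ldots,s_r)=\sum_{1\le k_1<k_2<\cdots<k_r\le n}\frac{1}{k_1^{s_1}\cdots k_r^{s_r}}$, where $s_1,\dots,s_r$ are positive integers. *)

theory Defs
  imports Complex_Main
begin

definition H :: "nat \<Rightarrow> nat list \<Rightarrow> rat" where
  "H n s = (\<Sum>ks \<in> {ks. length ks = length s \<and> sorted_wrt (<) ks \<and> set ks \<subseteq> {1..n}}.
      \<Prod>i<length s. 1 / (of_nat (ks ! i)) ^ (s ! i))"

end

theory Submission
  imports Defs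
begin

text \<open>The summands with \<open>k_1 = 1\<close> do not depend on \<open>s_1\<close>, so their sum is a fixed
  rational \<open>c\<close>. Every other summand is at most \<open>2^(-s_1)\<close>; if \<open>n > r\<close> their sum is positive
  and tends to \<open>0\<close>, so for large \<open>s_1\<close> the value of \<open>H_n\<close> lies strictly between
  \<open>\<lfloor>c\<rfloor>\<close> and \<open>\<lfloor>c\<rfloor> + 1\<close>. If \<open>n = r\<close> the only tuple is \<open>(1, \<dots>, n)\<close>, and
  \<open>H_n = 1 / (2^s_2 \<cdots> n^s_r)\<close> lies in \<open>(0, 1/2]\<close>.\<close>

lemma add_small_not_Ints:
  fixes c e :: "'a::floor_ceiling"
  assumes "0 < e" "e < 1 - frac c"
  shows "c + e \<notin> \<int>"
proof -
  have "\<lfloor>c + e\<rfloor> = \<lfloor>c\<rfloor>"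
    using assms of_int_floor_le[of c] unfolding frac_def by (intro floor_unique) linarith+
  then have "frac (c + e) = frac c + e" by (simp add: frac_def)
  then show ?thesis using assms(1) frac_ge_0[of c] frac_gt_0_iff by (metis add_nonneg_pos)
qed

lemma eventually_add_small_not_Ints:
  fixes c C :: "'a::floor_ceiling" and e :: "nat \<Rightarrow> 'a"
  assumes pos: "\<And>s. 0 < e s" and le: "\<And>s. e s \<le> C / 2 ^ s"
  shows "\<exists>M::int. \<forall>s::nat. int s > M \<longrightarrow> c + e s \<notin> \<int>"
proof (intro exI allI impI)
  define \<delta> where "\<delta> = 1 - frac c"
  have \<delta>: "0 < \<delta>" using frac_lt_1 by (simp add: \<delta>_def)
  fix s :: nat
  assume "int s > \<lceil>C / \<delta>\<rceil>"
  then have "C / \<delta> < of_nat s"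
    by (metis le_of_int_ceiling of_int_less_iff of_int_of_nat_eq order.strict_trans1)
  also have "\<dots> < 2 ^ s" by (metis less_exp of_nat_less_iff of_nat_numeral of_nat_power)
  finally have "C / 2 ^ s < \<delta>" using \<delta> by (simp add: field_simps)
  then show "c + e s \<notin> \<int>"
    using add_small_not_Ints pos le \<delta>_def by (metis order.strict_trans1)
qed

definition incr_tuples :: "nat \<Rightarrow> nat \<Rightarrow> nat list set" where
  "incr_tuples n r = {ks. length ks = r \<and> sorted_wrt (<) ks \<and> set ks \<subseteq> {1..n}}"

definition H_summand :: "nat list \<Rightarrow> nat list \<Rightarrow> rat" where
  "H_summand s ks = (\<Prod>i<length s. 1 / of_nat (ks ! i) ^ (s ! i))"

lemma H_eq_sum_incr_tuples: "H n s = (\<Sum>ks\<in>incr_tuples n (length s). H_summand s ks)"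
  by (simp add: H_def incr_tuples_def H_summand_def)

lemma finite_incr_tuples: "finite (incr_tuples n r)"
  by (rule finite_subset[OF _ finite_lists_length_eq[of "{1..n}" r]]) (auto simp: incr_tuples_def)

lemma upt_in_incr_tuples: "0 < m \<Longrightarrow> m + r \<le> Suc n \<Longrightarrow> [m..<m + r] \<in> incr_tuples n r"
  by (auto simp: incr_tuples_def)

lemma incr_tuples_self: "incr_tuples n n = {[1..<Suc n]}"
proof (intro equalityI subsetI)
  fix ks assume "ks \<in> incr_tuples n n"
  then have "distinct ks" "sorted ks" "length ks = n" "set ks \<subseteq> {1..n}"
    by (auto simp: incr_tuples_def strict_sorted_iff)
  moreover from this have "set ks = {1..n}"
    by (intro card_subset_eq) (auto simp: distinct_card)
  ultimately have "ks = [1..<Suc n]"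
    by (intro sorted_distinct_set_unique) (simp_all del: upt_Suc add: atLeastLessThanSuc_atLeastAtMost)
  then show "ks \<in> {[1..<Suc n]}" by simp
next
  show "ks \<in> incr_tuples n n" if "ks \<in> {[1..<Suc n]}" for ks
    using that upt_in_incr_tuples[of 1 n n] by simp
qed

lemma H_summand_Cons:
  "ks \<noteq> [] \<Longrightarrow> H_summand (a # s) ks = 1 / of_nat (hd ks) ^ a * H_summand s (tl ks)"
  by (cases ks) (simp_all add: H_summand_def prod.lessThan_Suc_shift del: prod.lessThan_Suc)

lemma H_summand_nonneg: "0 \<le> H_summand s ks"
  unfolding H_summand_def by (intro prod_nonneg) simp

lemma H_summand_le_one: "H_summand s ks \<le> 1"
  unfolding H_summand_def
proof (intro prod_le_1 conjI)
  show "1 / of_nat (ks ! i) ^ (s ! i) \<le> (1::rat)" for i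
    by (cases "ks ! i") (simp_all add: divide_le_eq power_0_left)
qed simp

lemma H_summand_pos: "(\<And>i. i < length s \<Longrightarrow> 0 < ks ! i) \<Longrightarrow> 0 < H_summand s ks"
  unfolding H_summand_def by (intro prod_pos) simp

lemma H_summand_le_pow2:
  assumes "ks \<noteq> []" "2 \<le> hd ks"
  shows "H_summand (a # s) ks \<le> 1 / 2 ^ a"
proof -
  have "1 / of_nat (hd ks) ^ a \<le> (1 / 2 ^ a :: rat)"
    using assms(2) by (intro divide_left_mono power_mono) auto
  then have "1 / of_nat (hd ks) ^ a * H_summand s (tl ks) \<le> 1 / 2 ^ a * 1"
    by (intro mult_mono H_summand_le_one H_summand_nonneg) auto
  then show ?thesis using assms(1) by (simp add: H_summand_Cons)
qed

definition H_k1_eq_1 :: "nat \<Rightarrow> nat list \<Rightarrow> rat" where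
  "H_k1_eq_1 n t =
     (\<Sum>ks\<in>{ks\<in>incr_tuples n (Suc (length t)). hd ks = 1}. H_summand t (tl ks))"

definition H_k1_ge_2 :: "nat \<Rightarrow> nat list \<Rightarrow> rat" where
  "H_k1_ge_2 n s = (\<Sum>ks\<in>{ks\<in>incr_tuples n (length s). hd ks \<noteq> 1}. H_summand s ks)"

lemma H_Cons_split: "H n (a # t) = H_k1_eq_1 n t + H_k1_ge_2 n (a # t)"
proof -
  let ?S = "incr_tuples n (Suc (length t))"
  have "H n (a # t) = (\<Sum>ks\<in>{ks\<in>?S. hd ks = 1}. H_summand (a # t) ks) + H_k1_ge_2 n (a # t)"
    unfolding H_eq_sum_incr_tuples H_k1_ge_2_def
    using sum.Int_Diff[OF finite_incr_tuples, of "H_summand (a # t)" _ _ "{ks. hd ks = 1}"]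
    by (simp add: Int_def set_diff_eq)
  also have "(\<Sum>ks\<in>{ks\<in>?S. hd ks = 1}. H_summand (a # t) ks) = H_k1_eq_1 n t"
    unfolding H_k1_eq_1_def
  proof (intro sum.cong refl)
    fix ks assume "ks \<in> {ks\<in>?S. hd ks = 1}"
    then have "ks \<noteq> []" "hd ks = 1" by (auto simp: incr_tuples_def)
    then show "H_summand (a # t) ks = H_summand t (tl ks)" by (simp add: H_summand_Cons)
  qed
  finally show ?thesis .
qed

lemma H_k1_ge_2_pos:
  assumes "Suc (length t) < n"
  shows "0 < H_k1_ge_2 n (a # t)"
proof -
  let ?w = "[2..<2 + Suc (length t)]"
  have w: "?w \<in> {ks\<in>incr_tuples n (length (a # t)). hd ks \<noteq> 1}"
    using assms upt_in_incr_tuples[of 2 "Suc (length t)" n] by (simp del: upt_Suc)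
  have "0 < H_summand (a # t) ?w"
    by (intro H_summand_pos) (simp del: upt_Suc)
  also have "\<dots> \<le> H_k1_ge_2 n (a # t)"
    unfolding H_k1_ge_2_def using w
    by (intro member_le_sum H_summand_nonneg) (simp_all add: finite_incr_tuples)
  finally show ?thesis .
qed

lemma H_k1_ge_2_le:
  "H_k1_ge_2 n (a # t) \<le> of_nat (card (incr_tuples n (Suc (length t)))) / 2 ^ a"
proof -
  let ?S = "incr_tuples n (Suc (length t))"
  have "H_k1_ge_2 n (a # t) \<le> (\<Sum>ks\<in>{ks\<in>?S. hd ks \<noteq> 1}. 1 / 2 ^ a)"
    unfolding H_k1_ge_2_def length_Cons
  proof (intro sum_mono H_summand_le_pow2)
    fix ks assume "ks \<in> {ks\<in>?S. hd ks \<noteq> 1}"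
    then have "ks \<noteq> []" "set ks \<subseteq> {1..n}" "hd ks \<noteq> 1"
      by (auto simp: incr_tuples_def)
    moreover from this have "hd ks \<in> {1..n}" using hd_in_set by blast
    ultimately show "ks \<noteq> []" "2 \<le> hd ks" by auto
  qed
  also have "\<dots> \<le> of_nat (card ?S) / 2 ^ a"
    by (simp add: divide_right_mono card_mono finite_incr_tuples)
  finally show ?thesis .
qed

lemma H_full_not_Ints:
  assumes "Suc (length t) = n" "t \<noteq> []" "\<forall>x \<in> set t. 0 < x"
  shows "H n (a # t) \<notin> \<int>"
proof -
  obtain b u where t: "t = b # u" and "0 < b" using assms(2,3) by (cases t) auto
  have "H n (a # t) = H_summand (a # t) [1..<Suc n]"
    using assms(1) by (simp add: H_eq_sum_incr_tuples incr_tuples_self)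
  also have "\<dots> = H_summand t [2..<Suc n]"
    using assms(1) by (simp add: H_summand_Cons upt_rec[of 1] numeral_2_eq_2 del: upt_Suc)
  finally have H: "H n (a # t) = H_summand (b # u) [2..<Suc n]" unfolding t .
  have pos: "0 < H n (a # t)"
    unfolding H using assms(1) t by (intro H_summand_pos) (simp del: upt_Suc)
  have "H n (a # t) \<le> 1 / 2 ^ b"
    unfolding H using assms(1) t by (intro H_summand_le_pow2) (simp_all add: upt_rec[of 2] del: upt_Suc)
  also have "\<dots> < 1"
    using \<open>0 < b\<close> by simp
  finally show ?thesis
    using pos add_small_not_Ints[of "H n (a # t)" 0] by simp
qed

lemma H_eventually_not_Ints:
  assumes "Suc (length t) < n"
  shows "\<exists>M::int. \<forall>a::nat. int a > M \<longrightarrow> H n (a # t) \<notin> \<int>"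
  unfolding H_Cons_split
  using eventually_add_small_not_Ints[OF H_k1_ge_2_pos[OF assms] H_k1_ge_2_le] .

theorem lemma3:
  fixes n r :: nat and t :: "nat list"
  assumes "2 \<le> r" and "r \<le> n"
    and "length t = r - 1"
    and "\<forall>x \<in> set t. x > 0"
  shows "\<exists>M::int. \<forall>s1::nat. int s1 > M \<longrightarrow> H n (s1 # t) \<notin> \<int>"
proof (cases "r = n")
  case True
  with assms have "Suc (length t) = n" "t \<noteq> []" by auto
  then show ?thesis using assms(4) H_full_not_Ints by blast
next
  case False
  then show ?thesis using assms by (intro H_eventually_not_Ints) simp
qed

end
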